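(* Every line of $\mathrm{PG}(3,q)$ that has at least one point in common with $\mathcal{C}$ (equivalently, every line $\delta_3(\mathcal{K}_1)\cap\delta_3(\mathcal{K}_2)$ arising from a pencil of cubics $\mathcal{P}(\mathcal{K}_1,\mathcal{K}_2)$ on $\mathrm{PG}(1,q)$ with nonempty base locus) belongs to $\mathcal{L}_2\cup\mathcal{L}_3\cup\mathcal{L}_6\cup\mathcal{L}_7\cup\mathcal{L}_8$.
   Context: Let $q$ be a power of a prime $p\neq 2,3$. In $\mathrm{PG}(3,q)$ with coordinates $(Y_0,\dots,Y_3)$, the twisted cubic is $\mathcal{C}=\{(1,t,t^2,t^3):t\in\mathbb{F}_q\}\cup\{(0,0,0,1)\}$, the image of $\nu_3:(x_0,x_1)\mapsto(x_0^3,x_0^2x_1,x_0x_1^2,x_1^3)$. $G\le \mathrm{PGL}(4,q)$ is the image of $\mathrm{PGL}(2,q)$ under the map sending the matrix $\begin{pmatrix}a&b\\c&d\end{pmatrix}$ to $\begin{pmatrix} a^3&a^2b&ab^2&b^3\\ 3a^2c&a^2d+2abc&b^2c+2abd&3b^2d\\ 3ac^2&bc^2+2acd&ad^2+2bcd&3bd^2\\ c^3&c^2d&cd^2&d^3\end{pmatrix}$. Osculating planes: $\Pi(t):-t^3Y_0+3t^2Y_1-3tY_2+Y_3=0$, $\Pi(\infty):Y_0=0$. Tangent line at $P\in\mathcal{C}$: the line through $P$ meeting $\mathcal{C}$ with multiplicity two at $P$. The polarity $\sigma$ maps $(y_0,y_1,y_2,y_3)$ to the plane $-y_3Y_0+3y_2Y_1-3y_1Y_2+y_0Y_3=0$;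 for a line $\ell$, $\ell^\sigma=\bigcap_{P\in\ell}P^\sigma$. A cubic on $\mathrm{PG}(1,q)$ is $\mathcal{Z}(f)$ for a binary cubic form $f=y_{30}X_0^3+y_{21}X_0^2X_1+y_{12}X_0X_1^2+y_{03}X_1^3$, and $\delta_3(\mathcal{Z}(f))$ is the plane $y_{30}Y_0+y_{21}Y_1+y_{12}Y_2+y_{03}Y_3=0$; the pencil $\mathcal{P}(\mathcal{Z}(f_1),\mathcal{Z}(f_2))$ consists of the cubics $\mathcal{Z}(\alpha f_1+\beta f_2)$, with base locus $\mathcal{Z}(f_1)\cap\mathcal{Z}(f_2)$. Orbits: $\mathcal{L}_2$ = tangent lines of $\mathcal{C}$; $\mathcal{L}_3$ = non-tangent lines meeting $\mathcal{C}$ in exactly one point and contained in an osculating plane; $\mathcal{L}_6$ = lines joining two distinct points of $\mathcal{C}$; $\mathcal{L}_7=\{\ell^\sigma:\ell\in\mathcal{L}_4\}$ where $\mathcal{L}_4$ is the $G$-orbit of the line $Y_0=Y_2-Y_3=0$; $\mathcal{L}_8=\{\ell^\sigma:\ell\in\mathcal{L}_5\}$ where $\mathcal{L}_5$ is the $G$-orbit of the line $Y_3-3uY_2+3u^2Y_1-u^3Y_0=Y_1-Y_2=0$ for some $u\in\mathbb{F}_q$ with $u^2-u+1$ a non-square. *)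

theory Defs
  imports Main
begin

text \<open>Points of PG(3,q) are represented by homogeneous coordinate vectors
  (Y0,Y1,Y2,Y3) over a finite field 'a; lines are 2-dimensional subspaces
  of 'a^4, represented as sets of coordinate vectors.\<close>

type_synonym 'a pt = "'a \<times> 'a \<times> 'a \<times> 'a"

definition padd :: "'a::field pt \<Rightarrow> 'a pt \<Rightarrow> 'a pt" where
  "padd = (\<lambda>(x0,x1,x2,x3) (y0,y1,y2,y3). (x0+y0, x1+y1, x2+y2, x3+y3))"

definition psmult :: "'a::field \<Rightarrow> 'a pt \<Rightarrow> 'a pt" where
  "psmult c = (\<lambda>(x0,x1,x2,x3). (c*x0, c*x1, c*x2, c*x3))"

definition span2 :: "'a::field pt \<Rightarrow> 'a pt \<Rightarrow> 'a pt set" where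
  "span2 u v = {padd (psmult s u) (psmult t v) | s t. True}"

definition indep2 :: "'a::field pt \<Rightarrow> 'a pt \<Rightarrow> bool" where
  "indep2 u v \<longleftrightarrow> (\<forall>s t. padd (psmult s u) (psmult t v) = (0,0,0,0) \<longrightarrow> s = 0 \<and> t = 0)"

definition is_line :: "'a::field pt set \<Rightarrow> bool" where
  "is_line l \<longleftrightarrow> (\<exists>u v. indep2 u v \<and> l = span2 u v)"

text \<open>Points of the twisted cubic, parametrised by PG(1,q) = 'a option
  (None = the parameter \<infinity>).\<close>
fun cpt :: "'a::field option \<Rightarrow> 'a pt" where
  "cpt None = (0,0,0,1)"
| "cpt (Some t) = (1, t, t^2, t^3)"

text \<open>Tangent line at a point of C: spanned by the point and the derivative
  of the parametrisation.\<close>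
fun tangent_line :: "'a::field option \<Rightarrow> 'a pt set" where
  "tangent_line None = span2 (0,0,0,1) (0,0,1,0)"
| "tangent_line (Some t) = span2 (1, t, t^2, t^3) (0, 1, 2*t, 3*t^2)"

fun osc_coef :: "'a::field option \<Rightarrow> 'a pt" where
  "osc_coef None = (1,0,0,0)"
| "osc_coef (Some t) = (-(t^3), 3*t^2, -(3*t), 1)"

definition plane_of :: "'a::field pt \<Rightarrow> 'a pt set" where
  "plane_of c = {y. (case c of (c0,c1,c2,c3) \<Rightarrow> case y of (y0,y1,y2,y3) \<Rightarrow>
                      c0*y0 + c1*y1 + c2*y2 + c3*y3) = 0}"

definition sigma_form :: "'a::field pt \<Rightarrow> 'a pt \<Rightarrow> 'a" where
  "sigma_form = (\<lambda>(y0,y1,y2,y3) (Y0,Y1,Y2,Y3). - y3*Y0 + 3*y2*Y1 - 3*y1*Y2 + y0*Y3)"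

definition polar :: "'a::field pt set \<Rightarrow> 'a pt set" where
  "polar l = {Y. \<forall>y\<in>l. sigma_form y Y = 0}"

text \<open>The action of the element of G induced by [[a,b],[c,d]] on points
  (row vectors y, y \<mapsto> y M, which is the action preserving C).\<close>
definition gact :: "'a::field \<Rightarrow> 'a \<Rightarrow> 'a \<Rightarrow> 'a \<Rightarrow> 'a pt \<Rightarrow> 'a pt" where
  "gact a b c d = (\<lambda>(y0,y1,y2,y3).
     (a^3*y0 + 3*a^2*c*y1 + 3*a*c^2*y2 + c^3*y3,
      a^2*b*y0 + (a^2*d + 2*a*b*c)*y1 + (b*c^2 + 2*a*c*d)*y2 + c^2*d*y3,
      a*b^2*y0 + (b^2*c + 2*a*b*d)*y1 + (a*d^2 + 2*b*c*d)*y2 + c*d^2*y3,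
      b^3*y0 + 3*b^2*d*y1 + 3*b*d^2*y2 + d^3*y3))"

definition Gorbit :: "'a::field pt set \<Rightarrow> 'a pt set set" where
  "Gorbit l = {gact a b c d ` l | a b c d. a*d - b*c \<noteq> 0}"

definition L2 :: "'a::field pt set set" where
  "L2 = range tangent_line"

definition L3 :: "'a::field pt set set" where
  "L3 = {l. is_line l \<and> l \<notin> L2 \<and> card {t. cpt t \<in> l} = 1 \<and>
            (\<exists>t. l \<subseteq> plane_of (osc_coef t))}"

definition L6 :: "'a::field pt set set" where
  "L6 = {span2 (cpt s) (cpt t) | s t. s \<noteq> t}"

definition L4 :: "'a::field pt set set" where
  "L4 = Gorbit {(y0,y1,y2,y3). y0 = 0 \<and> y2 - y3 = 0}"

definition L5 :: "'a::field \<Rightarrow> 'a pt set set" where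
  "L5 u = Gorbit {(y0,y1,y2,y3). y3 - 3*u*y2 + 3*u^2*y1 - u^3*y0 = 0 \<and> y1 - y2 = 0}"

definition L7 :: "'a::field pt set set" where
  "L7 = polar ` L4"

definition L8 :: "'a::field \<Rightarrow> 'a pt set set" where
  "L8 u = polar ` L5 u"

end

theory Submission
  imports Defs
begin

(* Let P be a point of C on l. If l is the tangent at P, or lies in the osculating plane at P,
   it is in L2 or L3; if l meets C in a second point it is a chord (L6). Otherwise move P to
   P\<infinity> = (0,0,0,1) by G. Then l = <P\<infinity>, (1,x,y,0)> with x^2 - y \<noteq> 0 because l misses C.
   The elements of G induced by [[1,b],[0,d]] fix P\<infinity> and act on these lines by
   (x,y) \<mapsto> (b + d x, b^2 + 2 b d x + d^2 y), which multiplies x^2 - y by d^2 and is transitive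
   on each square class of x^2 - y. Computing the polars of the two base lines exhibits members
   of L7 with x^2 - y a square and of L8 u with x^2 - y = u^2 - u + 1, a nonsquare; since in a
   finite field of odd order the product of two nonsquares is a square, every class is covered. *)

lemma padd_eq [simp]: "padd (x0,x1,x2,x3) (y0,y1,y2,y3) = (x0+y0, x1+y1, x2+y2, x3+y3)"
  by (simp add: padd_def)

lemma psmult_eq [simp]: "psmult c (x0,x1,x2,x3) = (c*x0, c*x1, c*x2, c*x3)"
  by (simp add: psmult_def)

lemma psmult_psmult: "psmult k (psmult m y) = psmult (k*m) y"
  by (cases y) (simp add: algebra_simps)

lemma psmult_one: "psmult 1 y = y"
  by (cases y) simp

lemma lincomb_zero: "padd (psmult 0 u) (psmult 0 v) = (0,0,0,0)"
  by (cases u; cases v) simp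

lemma lincomb_unit: "padd (psmult 1 u) (psmult 0 v) = u" "padd (psmult 0 u) (psmult 1 v) = v"
  by (cases u; cases v; simp)+

lemma lincomb_lincomb:
  "padd (psmult s (padd (psmult a u) (psmult b v))) (psmult t (padd (psmult c u) (psmult d v)))
   = padd (psmult (s*a+t*c) u) (psmult (s*b+t*d) v)"
  by (cases u; cases v) (simp add: algebra_simps)

lemma mem_span2_iff: "z \<in> span2 u v \<longleftrightarrow> (\<exists>s t. z = padd (psmult s u) (psmult t v))"
  by (auto simp: span2_def)

lemma span2_left_mem: "u \<in> span2 u v" and span2_right_mem: "v \<in> span2 u v"
  unfolding mem_span2_iff using lincomb_unit by metis+

lemma span2_psmult_mem:
  assumes "z \<in> span2 u v" shows "psmult k z \<in> span2 u v"
proof -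
  obtain s t where z: "z = padd (psmult s u) (psmult t v)" using assms by (auto simp: mem_span2_iff)
  have "psmult k z = padd (psmult (k*s) u) (psmult (k*t) v)"
    unfolding z by (cases u; cases v) (simp add: algebra_simps)
  then show ?thesis unfolding mem_span2_iff by blast
qed

lemma span2_subset:
  assumes "x \<in> span2 u v" "y \<in> span2 u v"
  shows "span2 x y \<subseteq> span2 u v"
proof
  fix z assume "z \<in> span2 x y"
  then obtain s t where z: "z = padd (psmult s x) (psmult t y)" by (auto simp: mem_span2_iff)
  obtain a b c d where x: "x = padd (psmult a u) (psmult b v)"
    and y: "y = padd (psmult c u) (psmult d v)"
    using assms by (auto simp: mem_span2_iff)
  show "z \<in> span2 u v" unfolding z x y lincomb_lincomb mem_span2_iff by blast
qed

lemma indep2_lincomb_det: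
  assumes ind: "indep2 (padd (psmult a u) (psmult b v)) (padd (psmult c u) (psmult d v))"
  shows "a*d - b*c \<noteq> 0"
proof
  assume det: "a*d - b*c = 0"
  let ?x = "padd (psmult a u) (psmult b v)" and ?y = "padd (psmult c u) (psmult d v)"
  have "padd (psmult d ?x) (psmult (-b) ?y) = (0,0,0,0)"
    unfolding lincomb_lincomb using det by (simp add: algebra_simps lincomb_zero)
  then have "d = 0 \<and> -b = 0" using ind unfolding indep2_def by blast
  then have "b = 0" by simp
  have "padd (psmult (-c) ?x) (psmult a ?y) = (0,0,0,0)"
    unfolding lincomb_lincomb using det by (simp add: algebra_simps lincomb_zero)
  then have "-c = 0 \<and> a = 0" using ind unfolding indep2_def by blast
  then have "a = 0" by simp
  have "padd (psmult 1 ?x) (psmult 0 ?y) = (0,0,0,0)"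
    using \<open>a = 0\<close> \<open>b = 0\<close> by (simp only: lincomb_unit lincomb_zero)
  then have "1 = (0::'a)" using ind unfolding indep2_def by blast
  then show False by simp
qed

lemma span2_eq_span2:
  assumes ind: "indep2 x y" and "x \<in> span2 u v" "y \<in> span2 u v"
  shows "span2 x y = span2 u v"
proof
  show "span2 x y \<subseteq> span2 u v" using assms(2,3) by (rule span2_subset)
  obtain a b c d where x: "x = padd (psmult a u) (psmult b v)"
    and y: "y = padd (psmult c u) (psmult d v)"
    using assms by (auto simp: mem_span2_iff)
  define D where "D = a*d - b*c"
  have D: "D \<noteq> 0" using ind unfolding x y D_def by (rule indep2_lincomb_det)
  have "d/D*a + -b/D*c = (a*d - b*c)/D" "-c/D*b + a/D*d = (a*d - b*c)/D"
    by (simp_all add: diff_divide_distrib algebra_simps)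
  then have "d/D*a + -b/D*c = 1" "d/D*b + -b/D*d = 0" "-c/D*a + a/D*c = 0" "-c/D*b + a/D*d = 1"
    using D by (simp_all add: D_def[symmetric])
  then have "padd (psmult (d/D) x) (psmult (-b/D) y) = u"
            "padd (psmult (-c/D) x) (psmult (a/D) y) = v"
    unfolding x y lincomb_lincomb by (simp_all only: lincomb_unit)
  then have "u \<in> span2 x y" "v \<in> span2 x y" unfolding mem_span2_iff by blast+
  then show "span2 u v \<subseteq> span2 x y" by (rule span2_subset)
qed

lemma padd_commute: "padd x y = padd y x"
  by (cases x; cases y) (simp add: add.commute)

lemma indep2_commute: "indep2 u v \<Longrightarrow> indep2 v u"
  unfolding indep2_def by (metis padd_commute)

lemma indep2_lincomb_left:
  assumes ind: "indep2 u v" and a: "a \<noteq> 0"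
  shows "indep2 (padd (psmult a u) (psmult b v)) v"
  unfolding indep2_def
proof (intro allI impI)
  fix s t assume "padd (psmult s (padd (psmult a u) (psmult b v))) (psmult t v) = (0,0,0,0)"
  then have "padd (psmult (s*a + t*0) u) (psmult (s*b + t*1) v) = (0,0,0,0)"
    using lincomb_lincomb[of s a u b v t 0 1] lincomb_unit by metis
  then have "s*a + t*0 = 0 \<and> s*b + t*1 = 0" using ind unfolding indep2_def by blast
  then show "s = 0 \<and> t = 0" using a by auto
qed

lemma is_line_span2_through:
  assumes l: "is_line l" and p: "p \<in> l" "p \<noteq> (0,0,0,0)"
  shows "\<exists>w. indep2 p w \<and> l = span2 p w"
proof -
  obtain u v where uv: "indep2 u v" "l = span2 u v" using l by (auto simp: is_line_def)
  obtain a b where pab: "p = padd (psmult a u) (psmult b v)" using p uv by (auto simp: mem_span2_iff)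
  show ?thesis
  proof (cases "a = 0")
    case False
    then have ind: "indep2 p v" unfolding pab using uv(1) by (rule indep2_lincomb_left[rotated])
    have "span2 p v = l"
      unfolding uv(2) by (rule span2_eq_span2[OF ind]) (use p uv in \<open>simp_all add: span2_right_mem\<close>)
    with ind show ?thesis by metis
  next
    case True
    then have "p = padd (psmult b v) (psmult 0 u)" unfolding pab by (cases u; cases v) simp
    moreover have "b \<noteq> 0" using p(2) True unfolding pab by (cases u; cases v) auto
    ultimately have ind: "indep2 p u" using indep2_lincomb_left[OF indep2_commute[OF uv(1)]] by simp
    have "span2 p u = l"
      unfolding uv(2) by (rule span2_eq_span2[OF ind]) (use p uv in \<open>simp_all add: span2_left_mem\<close>)
    with ind show ?thesis by metis
  qed
qed

section \<open>The group G\<close>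

lemma gact_apply: "gact a b c d (y0,y1,y2,y3) =
     (a^3*y0 + 3*a^2*c*y1 + 3*a*c^2*y2 + c^3*y3,
      a^2*b*y0 + (a^2*d + 2*a*b*c)*y1 + (b*c^2 + 2*a*c*d)*y2 + c^2*d*y3,
      a*b^2*y0 + (b^2*c + 2*a*b*d)*y1 + (a*d^2 + 2*b*c*d)*y2 + c*d^2*y3,
      b^3*y0 + 3*b^2*d*y1 + 3*b*d^2*y2 + d^3*y3)"
  by (simp add: gact_def)

lemma gact_lincomb: "gact a b c d (padd (psmult s x) (psmult t y)) =
   padd (psmult s (gact a b c d x)) (psmult t (gact a b c d y))"
  by (cases x; cases y) (simp add: gact_apply algebra_simps)

lemma gact_psmult: "gact a b c d (psmult k y) = psmult k (gact a b c d y)"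
  by (cases y) (simp add: gact_apply algebra_simps)

lemma gact_gact: "gact a b c d (gact a' b' c' d' y) =
   gact (a'*a+b'*c) (a'*b+b'*d) (c'*a+d'*c) (c'*b+d'*d) y"
proof -
  obtain y0 y1 y2 y3 where y: "y = (y0,y1,y2,y3)" by (cases y) auto
  show ?thesis unfolding y gact_apply prod.inject by (intro conjI; algebra)
qed

lemma gact_scalar: "gact k 0 0 k y = psmult (k^3) y"
  by (cases y) (simp add: gact_apply power2_eq_square power3_eq_cube)

lemma gact_id: "gact 1 0 0 1 y = y"
  using gact_scalar[of 1 y] by (simp add: psmult_one)

lemma gact_adjugate: "gact a b c d (gact d (-b) (-c) a y) = psmult ((a*d-b*c)^3) y"
  using gact_gact[of a b c d d "-b" "-c" a y] gact_scalar[of "a*d-b*c" y]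
  by (simp add: algebra_simps)

lemma gact_inverse:
  assumes "a*d-b*c \<noteq> 0"
  shows "gact a b c d (psmult (1/(a*d-b*c)^3) (gact d (-b) (-c) a y)) = y"
  using assms by (simp add: gact_psmult gact_adjugate psmult_psmult psmult_one)

lemma gact_eq_zero:
  assumes "a*d-b*c \<noteq> 0" "gact a b c d x = (0,0,0,0)"
  shows "x = (0,0,0,0)"
proof -
  have "psmult ((d*a-(-b)*(-c))^3) x = gact d (-b) (-c) a (gact a b c d x)"
    using gact_adjugate[of d "-b" "-c" a x] by simp
  also have "\<dots> = (0,0,0,0)" using assms(2) by (simp add: gact_apply)
  finally show ?thesis using assms(1) by (cases x) (simp add: algebra_simps)
qed

lemma sigma_form_gact:
  "sigma_form (gact a b c d y) (gact a b c d z) = (a*d-b*c)^3 * sigma_form y z"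
proof -
  obtain y0 y1 y2 y3 where y: "y = (y0,y1,y2,y3)" by (cases y) auto
  obtain z0 z1 z2 z3 where z: "z = (z0,z1,z2,z3)" by (cases z) auto
  show ?thesis unfolding y z gact_apply sigma_form_def prod.case by algebra
qed

lemma gact_image_span2: "gact a b c d ` span2 x y = span2 (gact a b c d x) (gact a b c d y)"
proof (rule set_eqI)
  fix z
  have "z \<in> gact a b c d ` span2 x y \<longleftrightarrow>
        (\<exists>s t. z = gact a b c d (padd (psmult s x) (psmult t y)))"
    unfolding image_def Bex_def mem_span2_iff mem_Collect_eq by blast
  then show "z \<in> gact a b c d ` span2 x y \<longleftrightarrow> z \<in> span2 (gact a b c d x) (gact a b c d y)"
    unfolding mem_span2_iff gact_lincomb .
qed

lemma is_line_gact_image: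
  assumes det: "a*d-b*c \<noteq> 0" and l: "is_line l"
  shows "is_line (gact a b c d ` l)"
proof -
  obtain u v where uv: "indep2 u v" "l = span2 u v" using l by (auto simp: is_line_def)
  have "indep2 (gact a b c d u) (gact a b c d v)" unfolding indep2_def
  proof (intro allI impI)
    fix s t assume "padd (psmult s (gact a b c d u)) (psmult t (gact a b c d v)) = (0,0,0,0)"
    then have "padd (psmult s u) (psmult t v) = (0,0,0,0)"
      using gact_eq_zero[OF det] by (simp add: gact_lincomb)
    then show "s = 0 \<and> t = 0" using uv(1) unfolding indep2_def by blast
  qed
  then show ?thesis unfolding is_line_def uv(2) gact_image_span2 by blast
qed

lemma polar_gact_image:
  assumes det: "a*d-b*c \<noteq> 0"
  shows "polar (gact a b c d ` m) = gact a b c d ` polar m"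
proof
  show "gact a b c d ` polar m \<subseteq> polar (gact a b c d ` m)"
    by (auto simp: polar_def sigma_form_gact)
  show "polar (gact a b c d ` m) \<subseteq> gact a b c d ` polar m"
  proof
    fix y assume y: "y \<in> polar (gact a b c d ` m)"
    define z where "z = psmult (1/(a*d-b*c)^3) (gact d (-b) (-c) a y)"
    have gz: "gact a b c d z = y" unfolding z_def using gact_inverse[OF det] .
    have "z \<in> polar m" using y det unfolding polar_def
      by (auto simp flip: gz simp: sigma_form_gact)
    then show "y \<in> gact a b c d ` polar m" using gz by blast
  qed
qed

lemma polar_Gorbit_gact_image:
  assumes l: "l \<in> polar ` Gorbit m" and det: "a*d-b*c \<noteq> 0"
  shows "gact a b c d ` l \<in> polar ` Gorbit m"
proof -
  obtain a' b' c' d' where l: "l = polar (gact a' b' c' d' ` m)" and det': "a'*d'-b'*c' \<noteq> 0"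
    using assms(1) by (auto simp: Gorbit_def)
  let ?a = "a'*a+b'*c" and ?b = "a'*b+b'*d" and ?c = "c'*a+d'*c" and ?d = "c'*b+d'*d"
  have "?a*?d - ?b*?c = (a'*d'-b'*c')*(a*d-b*c)" by algebra
  then have "?a*?d - ?b*?c \<noteq> 0" using det det' by simp
  moreover have "gact a b c d ` l = polar (gact ?a ?b ?c ?d ` m)"
    unfolding l polar_gact_image[OF det, symmetric] image_image gact_gact ..
  ultimately show ?thesis unfolding Gorbit_def by blast
qed

lemma polar_mem_polar_Gorbit: "polar m \<in> polar ` Gorbit m"
proof -
  have "m = gact 1 0 0 1 ` m" by (simp add: gact_id)
  then show ?thesis unfolding Gorbit_def by (intro imageI) force
qed

section \<open>Lines through the point at infinity of C\<close>

definition pinf_line :: "'a::field \<Rightarrow> 'a \<Rightarrow> 'a pt set" where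
  "pinf_line x y = span2 (0,0,0,1) (1,x,y,0)"

lemma indep2_pinf: "indep2 (0,0,0,1) (1,x,y,0)"
  unfolding indep2_def by simp

lemma gact_image_pinf_line:
  assumes d: "d \<noteq> 0"
  shows "gact 1 b 0 d ` pinf_line x y = pinf_line (b + d*x) (b^2 + 2*b*d*x + d^2*y)"
proof -
  define z where "z = b^3 + 3*b^2*d*x + 3*b*d^2*y"
  have g1: "gact 1 b 0 d (0,0,0,1) = psmult (d^3) (0,0,0,1)" by (simp add: gact_apply)
  have g2: "gact 1 b 0 d (1,x,y,0) = (1, b + d*x, b^2 + 2*b*d*x + d^2*y, z)"
    by (simp add: gact_apply z_def algebra_simps)
  have "pinf_line (b + d*x) (b^2 + 2*b*d*x + d^2*y) =
        span2 (gact 1 b 0 d (0,0,0,1)) (gact 1 b 0 d (1,x,y,0))"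
    unfolding pinf_line_def
  proof (rule span2_eq_span2[OF indep2_pinf])
    show "(0,0,0,1) \<in> span2 (gact 1 b 0 d (0,0,0,1)) (gact 1 b 0 d (1,x,y,0))"
      unfolding mem_span2_iff g1 g2
      by (rule exI[of _ "1/d^3"], rule exI[of _ 0]) (use d in simp)
    show "(1, b + d*x, b^2 + 2*b*d*x + d^2*y, 0) \<in>
          span2 (gact 1 b 0 d (0,0,0,1)) (gact 1 b 0 d (1,x,y,0))"
      unfolding mem_span2_iff g1 g2
      by (rule exI[of _ "-z/d^3"], rule exI[of _ 1]) (use d in simp)
  qed
  then show ?thesis by (simp add: pinf_line_def gact_image_span2)
qed

lemma pinf_line_polar_Gorbit_square_class:
  assumes l0: "pinf_line x0 y0 \<in> polar ` Gorbit m"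
    and r: "r \<noteq> 0" and xy: "x^2 - y = r^2 * (x0^2 - y0)"
  shows "pinf_line x y \<in> polar ` Gorbit m"
proof -
  define b where "b = x - r*x0"
  have "b + r*x0 = x" by (simp add: b_def)
  moreover have "b^2 + 2*b*r*x0 + r^2*y0 = y"
    using xy by (simp add: b_def power2_eq_square algebra_simps)
  moreover have "gact 1 b 0 r ` pinf_line x0 y0 \<in> polar ` Gorbit m"
    using l0 r by (intro polar_Gorbit_gact_image) simp_all
  ultimately show ?thesis using gact_image_pinf_line[OF r, of b x0 y0] by simp
qed

lemma polar_L4_base:
  assumes three: "(3::'a::field) \<noteq> 0"
  shows "polar {(y0,y1,y2,y3::'a). y0 = 0 \<and> y2 - y3 = 0} = pinf_line (1/3) 0"
  unfolding pinf_line_def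
proof
  show "span2 (0,0,0,1) (1, 1/3, 0, 0) \<subseteq> polar {(y0,y1,y2,y3::'a). y0 = 0 \<and> y2 - y3 = 0}"
    using three by (auto simp: span2_def polar_def sigma_form_def)
  show "polar {(y0,y1,y2,y3::'a). y0 = 0 \<and> y2 - y3 = 0} \<subseteq> span2 (0,0,0,1) (1, 1/3, 0, 0)"
  proof
    fix Y :: "'a pt" assume Y: "Y \<in> polar {(y0,y1,y2,y3::'a). y0 = 0 \<and> y2 - y3 = 0}"
    obtain Y0 Y1 Y2 Y3 where YY: "Y = (Y0,Y1,Y2,Y3)" by (cases Y) auto
    have "sigma_form (0,1,0,0) Y = 0" "sigma_form (0,0,1,1) Y = 0" using Y by (auto simp: polar_def)
    then have "Y2 = 0" "Y0 = 3*Y1" using three by (auto simp: YY sigma_form_def)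
    then have "Y = padd (psmult Y3 (0,0,0,1)) (psmult (3*Y1) (1,1/3,0,0))"
      using three by (simp add: YY)
    then show "Y \<in> span2 (0,0,0,1) (1, 1/3, 0, 0)" unfolding mem_span2_iff by blast
  qed
qed

lemma polar_L5_base:
  fixes u :: "'a::field"
  assumes three: "(3::'a) \<noteq> 0"
  shows "polar {(y0,y1,y2,y3::'a). y3 - 3*u*y2 + 3*u^2*y1 - u^3*y0 = 0 \<and> y1 - y2 = 0}
     = span2 (0,1,1,0) (1,0,u^2-u,u^3)" (is "polar ?m = _")
proof
  show "span2 (0,1,1,0) (1,0,u^2-u,u^3) \<subseteq> polar ?m"
  proof
    fix Y assume "Y \<in> span2 (0,1,1,0) ((1::'a),0,u^2-u,u^3)"
    then obtain s t where Y: "Y = (t, s, s + t*(u^2-u), t*u^3)"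
      by (auto simp: span2_def algebra_simps)
    show "Y \<in> polar ?m"
      unfolding polar_def
    proof clarify
      fix y0 y1 y2 y3 assume h: "y3 - 3*u*y2 + 3*u^2*y1 - u^3*y0 = 0" "y1 - y2 = 0"
      have e2: "y2 = y1" using h by simp
      have e3: "y3 = 3*u*y1 - 3*u^2*y1 + u^3*y0" using h e2 by (simp add: algebra_simps)
      show "sigma_form (y0,y1,y2,y3) Y = 0" unfolding Y sigma_form_def e2 e3 prod.case by algebra
    qed
  qed
  show "polar ?m \<subseteq> span2 (0,1,1,0) (1,0,u^2-u,u^3)"
  proof
    fix Y :: "'a pt" assume Y: "Y \<in> polar ?m"
    obtain Y0 Y1 Y2 Y3 where YY: "Y = (Y0,Y1,Y2,Y3)" by (cases Y) auto
    have "(1,0,0,u^3) \<in> ?m" "(0,1,1,3*u-3*u^2) \<in> ?m" by simp_all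
    then have "sigma_form (1,0,0,u^3) Y = 0" "sigma_form (0,1,1,3*u-3*u^2) Y = 0"
      using Y unfolding polar_def by blast+
    then have e: "Y3 = u^3*Y0" "3*Y2 = 3*(Y1 + Y0*(u^2-u))"
      by (simp_all add: YY sigma_form_def algebra_simps)
    then have "Y2 = Y1 + Y0*(u^2-u)" using mult_left_cancel[OF three] by blast
    then have "Y = padd (psmult Y1 (0,1,1,0)) (psmult Y0 (1,0,u^2-u,u^3))"
      using e by (simp add: YY algebra_simps)
    then show "Y \<in> span2 (0,1,1,0) (1,0,u^2-u,u^3)" unfolding mem_span2_iff by blast
  qed
qed

lemma pinf_line_in_L7:
  fixes x y r :: "'a::field"
  assumes three: "(3::'a) \<noteq> 0" and r: "r \<noteq> 0" and xy: "x^2 - y = r^2"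
  shows "pinf_line x y \<in> L7"
proof -
  define m :: "'a pt set" where "m = {(y0,y1,y2,y3). y0 = 0 \<and> y2 - y3 = 0}"
  have base: "pinf_line (1/3) 0 \<in> polar ` Gorbit m"
    using polar_mem_polar_Gorbit[of m] unfolding m_def polar_L4_base[OF three] .
  have "(3*r)^2 * ((1/3)^2 - 0) = (3*r*(1/3))^2"
    by (simp only: diff_zero power_mult_distrib)
  then have "x^2 - y = (3*r)^2 * ((1/3)^2 - 0)" using xy three by simp
  moreover have "3*r \<noteq> 0" using three r by simp
  ultimately show ?thesis unfolding L7_def L4_def m_def[symmetric]
    by (intro pinf_line_polar_Gorbit_square_class[OF base])
qed

lemma gact_image_polar_L5_base:
  fixes u :: "'a::field"
  assumes F0: "3*u^2 - 3*u \<noteq> 0"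
  shows "gact (-u) 1 1 0 ` span2 (0,1,1,0) (1,0,u^2-u,u^3)
       = pinf_line ((1-2*u)/(3*u^2 - 3*u)) (1/(3*u^2 - 3*u))" (is "_ = pinf_line (_/?F) _")
  unfolding gact_image_span2 pinf_line_def
proof (rule span2_eq_span2[OF indep2_pinf, symmetric])
  have ga: "gact (-u) 1 1 0 (0,1,1,0) = (?F, 1-2*u, 1, 0)"
    by (simp add: gact_apply algebra_simps power2_eq_square)
  have gb: "gact (-u) 1 1 0 (1,0,u^2-u,u^3) = padd (psmult (-u) (?F, 1-2*u, 1, 0)) (psmult 1 (0,0,0,1))"
    by (simp add: gact_apply algebra_simps power2_eq_square power3_eq_cube)
  show "(0,0,0,1) \<in> span2 (gact (-u) 1 1 0 (0,1,1,0)) (gact (-u) 1 1 0 (1,0,u^2-u,u^3))"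
    unfolding mem_span2_iff gb by (rule exI[of _ u], rule exI[of _ 1]) (simp add: ga)
  show "(1,(1-2*u)/?F,1/?F,0) \<in> span2 (gact (-u) 1 1 0 (0,1,1,0)) (gact (-u) 1 1 0 (1,0,u^2-u,u^3))"
    unfolding mem_span2_iff gb
    by (rule exI[of _ "1/?F"], rule exI[of _ 0]) (use F0 in \<open>simp add: ga\<close>)
qed

lemma pinf_line_in_L8:
  fixes u x y r :: "'a::field"
  assumes three: "(3::'a) \<noteq> 0" and u0: "u \<noteq> 0" and u1: "u \<noteq> 1"
    and r: "r \<noteq> 0" and xy: "x^2 - y = (u^2-u+1)*r^2"
  shows "pinf_line x y \<in> L8 u"
proof -
  define m :: "'a pt set" where "m = {(y0,y1,y2,y3). y3 - 3*u*y2 + 3*u^2*y1 - u^3*y0 = 0 \<and> y1 - y2 = 0}"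
  define F where "F = 3*u^2 - 3*u"
  have "F = 3*(u*(u-1))" by (simp add: F_def algebra_simps power2_eq_square)
  then have F0: "F \<noteq> 0" using three u0 u1 by simp
  have "span2 (0,1,1,0) (1,0,u^2-u,u^3) \<in> polar ` Gorbit m"
    using polar_mem_polar_Gorbit[of m] unfolding m_def polar_L5_base[OF three] .
  then have base: "pinf_line ((1-2*u)/F) (1/F) \<in> polar ` Gorbit m"
    using gact_image_polar_L5_base F0 polar_Gorbit_gact_image[of _ m "-u" 0 1 1]
    unfolding F_def by fastforce
  have "((1-2*u)/F)^2 - 1/F = ((1-2*u)^2 - F) / F^2"
    unfolding power_divide using F0 by (simp add: diff_divide_distrib power2_eq_square)
  moreover have "(1-2*u)^2 - F = u^2-u+1"
    by (simp add: F_def power2_eq_square algebra_simps)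
  ultimately have "x^2 - y = (r*F)^2 * (((1-2*u)/F)^2 - 1/F)"
    using xy F0 by (simp add: power_mult_distrib)
  moreover have "r*F \<noteq> 0" using r F0 by simp
  ultimately show ?thesis unfolding L8_def L5_def m_def[symmetric]
    by (intro pinf_line_polar_Gorbit_square_class[OF base])
qed

section \<open>Squares in a finite field of odd characteristic\<close>

lemma card_nonzero_eq_twice_card_nonzero_squares:
  assumes two: "(2::'a::{finite,field}) \<noteq> 0"
  shows "card (UNIV - {0::'a}) = 2 * card ((\<lambda>x. x^2) ` (UNIV - {0::'a}))"
proof -
  define U where "U = (UNIV::'a set) - {0}"
  define F where "F s = {x\<in>U. x^2 = s}" for s
  have U: "U = (\<Union>s\<in>(\<lambda>x. x^2) ` U. F s)" by (auto simp: F_def)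
  have fiber: "card (F (v^2)) = 2" if v: "v \<in> U" for v
  proof -
    have "F (v^2) = {v, -v}" using v by (auto simp: F_def U_def power2_eq_iff)
    moreover have "v \<noteq> -v"
    proof
      assume "v = -v"
      then have "2*v = 0" by (metis mult_2 add.right_inverse)
      then show False using two v by (auto simp: U_def)
    qed
    ultimately show ?thesis by simp
  qed
  have "card U = (\<Sum>s\<in>(\<lambda>x. x^2) ` U. card (F s))"
    by (subst U, rule card_UN_disjoint) (auto simp: F_def)
  also have "\<dots> = (\<Sum>s\<in>(\<lambda>x. x^2) ` U. 2)" using fiber by (intro sum.cong) auto
  finally show ?thesis by (simp add: U_def)
qed

text \<open>Multiplication by a nonsquare maps the nonzero squares injectively into the nonsquares,
  which are equally many, hence onto them.\<close>

lemma nonsquare_mult_nonsquare: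
  fixes a b :: "'a::{finite,field}"
  assumes two: "(2::'a) \<noteq> 0" and a: "\<not>(\<exists>w. w^2 = a)" and b: "\<not>(\<exists>w. w^2 = b)"
  shows "\<exists>w. w^2 = a*b"
proof -
  define U where "U = (UNIV::'a set) - {0}"
  define S where "S = (\<lambda>x. x^2) ` U"
  have a0: "a \<noteq> 0" using a by (metis zero_power2)
  have "S \<subseteq> U" by (auto simp: S_def U_def)
  then have card_nonsquares: "card (U - S) = card S"
    using card_nonzero_eq_twice_card_nonzero_squares[OF two]
    by (simp add: U_def S_def card_Diff_subset)
  have into: "(\<lambda>s. a*s) ` S \<subseteq> U - S"
  proof
    fix y assume "y \<in> (\<lambda>s. a*s) ` S"
    then obtain v where v: "v \<noteq> 0" "y = a * v^2" by (auto simp: S_def U_def)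
    have "y \<notin> S"
    proof
      assume "y \<in> S"
      then obtain w where "y = w^2" by (auto simp: S_def)
      then have "(w/v)^2 = a" using v by (simp add: power_divide field_simps)
      then show False using a by blast
    qed
    then show "y \<in> U - S" using v a0 by (simp add: U_def)
  qed
  have "card ((\<lambda>s. a*s) ` S) = card S" using a0 by (intro card_image) (auto simp: inj_on_def)
  then have "(\<lambda>s. a*s) ` S = U - S"
    using into card_nonsquares by (intro card_subset_eq) auto
  moreover have "b \<in> U - S" using b by (auto simp: U_def S_def)
  ultimately have "b \<in> (\<lambda>s. a*s) ` S" by simp
  then obtain v where "b = a * v^2" by (auto simp: S_def)
  then have "(a*v)^2 = a*b" by (simp add: power2_eq_square algebra_simps)
  then show ?thesis by blast
qed

section \<open>Lines meeting the twisted cubic\<close>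

lemma is_line_psmult_mem: "is_line l \<Longrightarrow> z \<in> l \<Longrightarrow> psmult k z \<in> l"
  unfolding is_line_def using span2_psmult_mem by blast

lemma cpt_nonzero: "cpt t \<noteq> (0,0,0,0)"
  by (cases t) auto

lemma indep2_cpt:
  assumes "s \<noteq> t" shows "indep2 (cpt s) (cpt t)"
proof (cases s; cases t)
  fix a b assume st: "s = Some a" "t = Some b"
  show ?thesis unfolding indep2_def st
  proof (intro allI impI)
    fix x y assume "padd (psmult x (cpt (Some a))) (psmult y (cpt (Some b))) = (0,0,0,0)"
    then have h: "x + y = 0" "x*a + y*b = 0" by auto
    then have "y = -x" by (simp add: eq_neg_iff_add_eq_0 add.commute)
    moreover have "x*(a-b) = 0" using h(2) unfolding \<open>y = -x\<close> by (simp add: algebra_simps)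
    moreover have "a - b \<noteq> 0" using assms st by auto
    ultimately show "x = 0 \<and> y = 0" by auto
  qed
qed (use assms in \<open>auto simp: indep2_def\<close>)

lemma chord_in_L6:
  assumes "is_line l" "cpt s \<in> l" "cpt t \<in> l" "s \<noteq> t"
  shows "l \<in> L6"
proof -
  obtain u v where uv: "indep2 u v" "l = span2 u v" using assms(1) by (auto simp: is_line_def)
  have "span2 (cpt s) (cpt t) = l" using span2_eq_span2[OF indep2_cpt[OF assms(4)]] assms uv by simp
  then show ?thesis using assms(4) unfolding L6_def by blast
qed

lemma cpt_in_osc_plane_iff: "cpt s \<in> plane_of (osc_coef t) \<longleftrightarrow> s = t"
proof (cases s; cases t)
  fix a b assume st: "s = Some a" "t = Some b"
  have "cpt s \<in> plane_of (osc_coef t) \<longleftrightarrow> (a-b)^3 = 0"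
    unfolding st by (simp add: plane_of_def power3_eq_cube power2_eq_square algebra_simps)
  then show ?thesis using st by simp
qed (auto simp: plane_of_def)

lemma cpt_in_tangent_line: "cpt t \<in> tangent_line t"
  by (cases t) (simp_all add: span2_left_mem)

lemma osc_plane_line_in_L3:
  assumes "is_line l" "cpt t \<in> l" "l \<subseteq> plane_of (osc_coef t)" "l \<noteq> tangent_line t"
  shows "l \<in> L3"
proof -
  have C: "{s. cpt s \<in> l} = {t}" using assms(2,3) cpt_in_osc_plane_iff by blast
  have "l \<notin> L2"
  proof
    assume "l \<in> L2"
    then obtain s where s: "l = tangent_line s" by (auto simp: L2_def)
    then have "s = t" using cpt_in_tangent_line assms(3) cpt_in_osc_plane_iff by blast
    then show False using s assms(4) by simp
  qed
  then show ?thesis unfolding L3_def using assms C by auto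
qed

lemma veronese_eq_psmult_cpt:
  assumes "(p, q) \<noteq> (0, 0)"
  shows "\<exists>k s. k \<noteq> 0 \<and> (p^3, p^2*q, p*q^2, q^3) = psmult k (cpt s)"
proof (cases "p = 0")
  case True
  then show ?thesis using assms by (intro exI[of _ "q^3"] exI[of _ None]) simp
next
  case False
  then have "(p^3, p^2*q, p*q^2, q^3) = psmult (p^3) (cpt (Some (q/p)))"
    by (simp add: power2_eq_square power3_eq_cube field_simps)
  moreover have "p^3 \<noteq> 0" using False by simp
  ultimately show ?thesis by blast
qed

lemma gact_cpt:
  assumes det: "a*d - b*c \<noteq> 0"
  shows "\<exists>k s'. k \<noteq> 0 \<and> gact a b c d (cpt s) = psmult k (cpt s')"
proof (cases s)
  case None
  have "(c, d) \<noteq> (0, 0)" using det by auto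
  moreover have "gact a b c d (cpt s) = (c^3, c^2*d, c*d^2, d^3)"
    using None by (simp add: gact_apply)
  ultimately show ?thesis using veronese_eq_psmult_cpt by metis
next
  case (Some x)
  have "(a + c*x, b + d*x) \<noteq> (0, 0)"
  proof
    assume "(a + c*x, b + d*x) = (0, 0)"
    then have "a = -(c*x)" "b = -(d*x)" by (simp_all add: eq_neg_iff_add_eq_0)
    then show False using det by (simp add: algebra_simps)
  qed
  moreover have "gact a b c d (cpt s) =
    ((a + c*x)^3, (a + c*x)^2*(b + d*x), (a + c*x)*(b + d*x)^2, (b + d*x)^3)"
    using Some by (simp add: gact_apply power2_eq_square power3_eq_cube algebra_simps)
  ultimately show ?thesis using veronese_eq_psmult_cpt by metis
qed

lemma cpt_in_gact_image:
  assumes det: "a*d - b*c \<noteq> 0" and l: "is_line l" and s: "cpt s \<in> gact a b c d ` l"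
  shows "\<exists>s' k. cpt s' \<in> l \<and> k \<noteq> 0 \<and> gact a b c d (cpt s') = psmult k (cpt s)"
proof -
  let ?D = "(a*d - b*c)^3"
  obtain y where y: "y \<in> l" "cpt s = gact a b c d y" using s by blast
  obtain k s' where k: "k \<noteq> 0" and ks': "gact d (-b) (-c) a (cpt s) = psmult k (cpt s')"
    using gact_cpt[of d a "-b" "-c" s] det by (auto simp: algebra_simps)
  have "psmult k (cpt s') = psmult ?D y"
    unfolding ks'[symmetric] y(2) gact_adjugate[of d "-b" "-c" a, simplified] by (simp add: algebra_simps)
  then have "psmult (1/k) (psmult k (cpt s')) = psmult (?D/k) y" by (simp add: psmult_psmult)
  then have cs': "cpt s' = psmult (?D/k) y" using k by (simp add: psmult_psmult psmult_one)
  then have "cpt s' \<in> l" using is_line_psmult_mem[OF l y(1)] by simp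
  moreover have "gact a b c d (cpt s') = psmult (?D/k) (cpt s)"
    unfolding cs' gact_psmult y(2) ..
  moreover have "?D/k \<noteq> 0" using det k by simp
  ultimately show ?thesis by blast
qed

lemma L7_L8_gact_image:
  assumes "l \<in> L7 \<union> L8 u" "a*d - b*c \<noteq> 0"
  shows "gact a b c d ` l \<in> L7 \<union> L8 u"
  using assms polar_Gorbit_gact_image unfolding L7_def L4_def L8_def L5_def by blast

lemma line_through_pinf:
  assumes l: "is_line l" and P: "cpt None \<in> l" and np: "\<not> l \<subseteq> plane_of (osc_coef None)"
  shows "\<exists>x y. l = pinf_line x y"
proof -
  obtain w where w: "l = span2 (0,0,0,1) w"
    using is_line_span2_through[OF l P] cpt_nonzero[of None] by auto
  obtain w0 w1 w2 w3 where ww: "w = (w0,w1,w2,w3)" by (cases w) auto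
  have w0: "w0 \<noteq> 0"
  proof
    assume "w0 = 0"
    then have "l \<subseteq> plane_of (osc_coef None)"
      unfolding w by (auto simp: mem_span2_iff ww plane_of_def)
    then show False using np by blast
  qed
  have "pinf_line (w1/w0) (w2/w0) = l"
    unfolding w pinf_line_def
  proof (rule span2_eq_span2[OF indep2_pinf])
    show "(0,0,0,1) \<in> span2 (0,0,0,1) w" by (rule span2_left_mem)
    have "(1, w1/w0, w2/w0, 0) = padd (psmult (-w3/w0) (0,0,0,1)) (psmult (1/w0) w)"
      using w0 by (simp add: ww)
    then show "(1, w1/w0, w2/w0, 0) \<in> span2 (0,0,0,1) w" unfolding mem_span2_iff by blast
  qed
  then show ?thesis by metis
qed

lemma pinf_line_in_L7_or_L8:
  fixes u x y :: "'a::{finite,field}"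
  assumes two: "(2::'a) \<noteq> 0" and three: "(3::'a) \<noteq> 0"
    and nu: "\<not> (\<exists>w. w^2 = u^2 - u + 1)" and ne: "x^2 - y \<noteq> 0"
  shows "pinf_line x y \<in> L7 \<union> L8 u"
proof (cases "\<exists>r. r^2 = x^2 - y")
  case True
  then obtain r where r: "x^2 - y = r^2" by metis
  then have "r \<noteq> 0" using ne by auto
  then show ?thesis using pinf_line_in_L7[OF three _ r] by simp
next
  case False
  define K where "K = u^2 - u + 1"
  obtain v where v: "v^2 = (x^2 - y) * K" using nonsquare_mult_nonsquare[OF two False] nu
    by (auto simp: K_def)
  have K0: "K \<noteq> 0" using nu K_def by (metis zero_power2)
  have "u \<noteq> 0" "u \<noteq> 1" using nu by (metis power_one diff_self add_0 zero_power2 diff_zero)+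
  have "x^2 - y = K * (v/K)^2"
    using K0 v by (simp add: power_divide power2_eq_square)
  moreover have "v/K \<noteq> 0" using K0 v ne by auto
  ultimately show ?thesis
    using pinf_line_in_L8[OF three \<open>u \<noteq> 0\<close> \<open>u \<noteq> 1\<close>, of "v/K"] by (simp add: K_def)
qed

lemma pinf_unisecant_in_L7_or_L8:
  fixes u :: "'a::{finite,field}" and l :: "'a pt set"
  assumes two: "(2::'a) \<noteq> 0" and three: "(3::'a) \<noteq> 0"
    and nu: "\<not> (\<exists>w. w^2 = u^2 - u + 1)"
    and l: "is_line l" and P: "cpt None \<in> l" and np: "\<not> l \<subseteq> plane_of (osc_coef None)"
    and only: "\<forall>x. cpt (Some x) \<notin> l"
  shows "l \<in> L7 \<union> L8 u"
proof -
  obtain x y where xy: "l = pinf_line x y" using line_through_pinf[OF l P np] by blast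
  have "cpt (Some x) = padd (psmult (x^3) (0,0,0,1)) (psmult 1 (1,x,x^2,0))" by simp
  then have "cpt (Some x) \<in> pinf_line x (x^2)" unfolding pinf_line_def mem_span2_iff by blast
  then have "x^2 - y \<noteq> 0" using only xy by auto
  then show ?thesis unfolding xy by (rule pinf_line_in_L7_or_L8[OF two three nu])
qed

text \<open>The map with matrix [[-t,1],[1,0]] moves the point with parameter t to P\<infinity> and
  the osculating plane there to Y0 = 0; its inverse is the map with matrix [[0,1],[1,t]].\<close>

lemma unisecant_in_L7_or_L8:
  fixes u :: "'a::{finite,field}" and l :: "'a pt set"
  assumes two: "(2::'a) \<noteq> 0" and three: "(3::'a) \<noteq> 0"
    and nu: "\<not> (\<exists>w. w^2 = u^2 - u + 1)"
    and l: "is_line l" and P: "cpt t \<in> l" and np: "\<not> l \<subseteq> plane_of (osc_coef t)"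
    and only: "\<forall>s. cpt s \<in> l \<longrightarrow> s = t"
  shows "l \<in> L7 \<union> L8 u"
proof (cases t)
  case None
  then show ?thesis using pinf_unisecant_in_L7_or_L8[OF two three nu l] P np only by blast
next
  case (Some t0)
  let ?g = "gact (-t0) 1 1 0" and ?h = "gact 0 1 1 t0"
  have hg: "?h (?g y) = y" for y
    using gact_gact[of 0 1 1 t0 "-t0" 1 1 0 y] by (simp add: gact_id)
  have g_osc: "?g y \<in> plane_of (osc_coef None) \<longleftrightarrow> y \<in> plane_of (osc_coef (Some t0))" for y
    by (cases y) (simp add: gact_apply plane_of_def power2_eq_square power3_eq_cube algebra_simps)
  have gP: "?g (cpt (Some t0)) = cpt None"
    by (simp add: gact_apply power2_eq_square power3_eq_cube algebra_simps)
  have "?g ` l \<in> L7 \<union> L8 u"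
  proof (rule pinf_unisecant_in_L7_or_L8[OF two three nu])
    show "is_line (?g ` l)" using l by (intro is_line_gact_image) simp_all
    show "cpt None \<in> ?g ` l" using P Some gP by (metis image_eqI)
    show "\<not> ?g ` l \<subseteq> plane_of (osc_coef None)" using np Some g_osc by auto
    show "\<forall>x. cpt (Some x) \<notin> ?g ` l"
    proof (intro allI notI)
      fix x assume "cpt (Some x) \<in> ?g ` l"
      then have "\<exists>s k. cpt s \<in> l \<and> k \<noteq> 0 \<and> ?g (cpt s) = psmult k (cpt (Some x))"
        using l by (intro cpt_in_gact_image) simp_all
      then obtain s k where "cpt s \<in> l" "k \<noteq> 0" "?g (cpt s) = psmult k (cpt (Some x))"
        by blast
      moreover have "s = Some t0" using \<open>cpt s \<in> l\<close> only Some by blast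
      ultimately show False using gP by simp
    qed
  qed
  then have "?h ` ?g ` l \<in> L7 \<union> L8 u" by (rule L7_L8_gact_image) simp
  then show ?thesis by (simp add: image_image hg)
qed

theorem mainTheorem13:
  fixes u :: "'a::{finite,field}" and l :: "'a pt set"
  assumes "(2::'a) \<noteq> 0" and "(3::'a) \<noteq> 0"
    and "\<not> (\<exists>w. w^2 = u^2 - u + 1)"
    and "is_line l"
    and "\<exists>t. cpt t \<in> l"
  shows "l \<in> L2 \<union> L3 \<union> L6 \<union> L7 \<union> L8 u"
proof -
  obtain t where t: "cpt t \<in> l" using assms(5) by blast
  consider "l = tangent_line t"
    | "l \<noteq> tangent_line t" "l \<subseteq> plane_of (osc_coef t)"
    | s where "s \<noteq> t" "cpt s \<in> l"
    | "\<not> l \<subseteq> plane_of (osc_coef t)" "\<forall>s. cpt s \<in> l \<longrightarrow> s = t"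
    by blast
  then show ?thesis
  proof cases
    case 1
    then show ?thesis by (simp add: L2_def)
  next
    case 2
    then show ?thesis using osc_plane_line_in_L3[OF assms(4) t] by simp
  next
    case (3 s)
    then show ?thesis using chord_in_L6[OF assms(4) _ t] by blast
  next
    case 4
    then show ?thesis using unisecant_in_L7_or_L8[OF assms(1-4) t] by blast
  qed
qed

end
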